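(* For every pair of integers $r,k\geq2$ with $(r,k)\neq(2,2)$, $$\frac{k\,p_{r,k}(k)\cdot\alpha}{r\beta}=\frac{1}{(r-1)(k-1)}.$$
   Context: $f_t(\mu)=e^{-\mu}\sum_{i\geq t}\mu^i/i!$. $\mu_{r,k}$ is the unique minimizer over $\mu>0$ of $\mu/f_{k-1}(\mu)^{r-1}$. $\alpha=f_k(\mu_{r,k})$, $\beta=\frac1r\mu_{r,k}f_{k-1}(\mu_{r,k})$, and $p_{r,k}(k)=e^{-\mu_{r,k}}\frac{\mu_{r,k}^k}{f_k(\mu_{r,k})\,k!}$. *)

theory Defs
  imports Complex_Main
begin

definition ftail :: "nat \<Rightarrow> real \<Rightarrow> real" where
  "ftail t \<mu> = exp (- \<mu>) * (\<Sum>i. if t \<le> i then \<mu> ^ i / fact i else 0)"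

definition mu_rk :: "nat \<Rightarrow> nat \<Rightarrow> real" where
  "mu_rk r k = (THE \<mu>. 0 < \<mu> \<and>
      (\<forall>\<nu>>0. \<mu> / ftail (k - 1) \<mu> ^ (r - 1) \<le> \<nu> / ftail (k - 1) \<nu> ^ (r - 1)))"

definition alpha_rk :: "nat \<Rightarrow> nat \<Rightarrow> real" where
  "alpha_rk r k = ftail k (mu_rk r k)"

definition beta_rk :: "nat \<Rightarrow> nat \<Rightarrow> real" where
  "beta_rk r k = (1 / real r) * mu_rk r k * ftail (k - 1) (mu_rk r k)"

definition p_rk :: "nat \<Rightarrow> nat \<Rightarrow> nat \<Rightarrow> real" where
  "p_rk r k j = exp (- mu_rk r k) * mu_rk r k ^ j / (ftail k (mu_rk r k) * fact j)"

end

theory Submission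
  imports Defs
begin

text \<open>
  With phi_t = tail_ratio t, i.e. phi_t(x) = sum_j t! x^j / (j + t)!, we have
  f_t(x) = e^(-x) x^t phi_t(x) / t!.
  The derivative of mu / f_(k-1)(mu)^(r-1) has the sign of phi_(k-1)(mu) - (r - 1)(k - 1).
  Since phi_(k-1) increases strictly from 1 to infinity and (r - 1)(k - 1) > 1 exactly when
  (r, k) is not (2, 2), the minimiser mu_(r,k) is the unique solution of
  phi_(k-1)(mu) = (r - 1)(k - 1); the left-hand side of the identity simplifies to
  1 / phi_(k-1)(mu_(r,k)).
\<close>

lemma ftail_sums:
  fixes x :: real
  shows "(\<lambda>i. if t \<le> i then x ^ i / fact i else 0) sums (exp x - (\<Sum>i<t. x ^ i / fact i))"
proof -
  have "(\<lambda>i. x ^ i / fact i - (if i \<in> {..<t} then x ^ i / fact i else 0))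
          sums (exp x - (\<Sum>i<t. x ^ i / fact i))"
    using exp_converges[of x] by (intro sums_diff sums_If_finite_set) (simp_all add: field_simps)
  moreover have "(\<lambda>i. x ^ i / fact i - (if i \<in> {..<t} then x ^ i / fact i else 0))
                 = (\<lambda>i. if t \<le> i then x ^ i / fact i else 0)"
    by (auto simp: fun_eq_iff)
  ultimately show ?thesis by simp
qed

lemma ftail_closed_form: "ftail t x = 1 - exp (- x) * (\<Sum>i<t. x ^ i / fact i)"
  unfolding ftail_def sums_unique[OF ftail_sums, symmetric]
  by (simp add: right_diff_distrib exp_minus field_simps)

lemma continuous_on_ftail: "continuous_on A (ftail t)"
  unfolding ftail_closed_form[abs_def] by (intro continuous_intros) auto

lemma has_real_derivative_exp_times_partial_exp:
  "((\<lambda>y. exp (- y) * (\<Sum>i\<le>m. y ^ i / fact i)) has_real_derivative - exp (- x) * x ^ m / fact m) (at x)"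
proof (induction m)
  case 0
  show ?case by (auto intro!: derivative_eq_intros)
next
  case (Suc m)
  have "((\<lambda>y. exp (- y)) has_real_derivative - exp (- x)) (at x)"
    by (auto intro!: derivative_eq_intros)
  moreover have "((\<lambda>y. y ^ Suc m / fact (Suc m)) has_real_derivative x ^ m / fact m) (at x)"
    using DERIV_cdivide[OF DERIV_pow[of "Suc m" x], of "fact (Suc m)"] by simp
  ultimately have "((\<lambda>y. exp (- y) * (y ^ Suc m / fact (Suc m))) has_real_derivative
      - exp (- x) * (x ^ Suc m / fact (Suc m)) + x ^ m / fact m * exp (- x)) (at x)"
    by (rule DERIV_mult)
  from DERIV_add[OF Suc.IH this] show ?case
    by (simp add: algebra_simps)
qed

lemma has_real_derivative_ftail_Suc:
  "(ftail (Suc m) has_real_derivative exp (- x) * x ^ m / fact m) (at x)"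
proof -
  have "ftail (Suc m) = (\<lambda>y. 1 - exp (- y) * (\<Sum>i\<le>m. y ^ i / fact i))"
    by (simp add: fun_eq_iff ftail_closed_form lessThan_Suc_atMost)
  then show ?thesis
    using DERIV_diff[OF DERIV_const has_real_derivative_exp_times_partial_exp] by simp
qed

definition tail_ratio :: "nat \<Rightarrow> real \<Rightarrow> real" where
  "tail_ratio t x = (\<Sum>j. fact t / fact (j + t) * x ^ j)"

lemma tail_ratio_sums:
  fixes x :: real
  assumes "x > 0"
  shows "(\<lambda>j. fact t / fact (j + t) * x ^ j) sums (fact t / x ^ t * (exp x - (\<Sum>i<t. x ^ i / fact i)))"
proof -
  have "(\<lambda>j. x ^ (j + t) / fact (j + t)) sums (exp x - (\<Sum>i<t. x ^ i / fact i))"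
    using ftail_sums[of t x] sums_zero_iff_shift[of t "\<lambda>i. if t \<le> i then x ^ i / fact i else 0"]
    by simp
  from sums_mult[OF this, of "fact t / x ^ t"] show ?thesis
    using assms by (simp add: power_add field_simps)
qed

lemma summable_tail_ratio: "x > 0 \<Longrightarrow> summable (\<lambda>j. fact t / fact (j + t) * (x::real) ^ j)"
  using tail_ratio_sums sums_summable by blast

lemma ftail_eq_tail_ratio:
  assumes "x > 0"
  shows "ftail t x = exp (- x) * x ^ t / fact t * tail_ratio t x"
  using assms
  unfolding ftail_def tail_ratio_def sums_unique[OF ftail_sums, symmetric]
    sums_unique[OF tail_ratio_sums[OF assms], symmetric]
  by simp

lemma tail_ratio_ge:
  assumes "x > 0"
  shows "1 + x / (real t + 1) \<le> tail_ratio t x"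
proof -
  have "(\<Sum>j<2. fact t / fact (j + t) * x ^ j) \<le> tail_ratio t x"
    unfolding tail_ratio_def using assms
    by (intro sum_le_suminf summable_tail_ratio) auto
  moreover have "(\<Sum>j<2. fact t / fact (j + t) * x ^ j) = 1 + x / (real t + 1)"
    by (simp add: numeral_2_eq_2 field_simps del: fact_Suc) (simp add: algebra_simps)
  ultimately show ?thesis by simp
qed

lemma tail_ratio_le_exp:
  assumes "x > 0"
  shows "tail_ratio t x \<le> exp x"
proof -
  have "fact t / fact (j + t) * x ^ j \<le> x ^ j / fact j" for j
  proof -
    have "fact t * fact j \<le> (fact (t + j) :: nat)"
      by (rule dvd_imp_le[OF fact_fact_dvd_fact]) simp
    then have "fact t * fact j \<le> (fact (j + t) :: real)"
      by (metis add.commute of_nat_fact of_nat_le_iff of_nat_mult)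
    then have "fact t / fact (j + t) \<le> (1 / fact j :: real)"
      by (simp add: field_simps)
    from mult_right_mono[OF this, of "x ^ j"] show ?thesis
      using assms by simp
  qed
  moreover have exp_sums: "(\<lambda>j. x ^ j / fact j) sums exp x"
    using exp_converges[of x] by (simp add: field_simps)
  ultimately have "tail_ratio t x \<le> (\<Sum>j. x ^ j / fact j)"
    unfolding tail_ratio_def using assms
    by (intro suminf_le summable_tail_ratio sums_summable[OF exp_sums])
  then show ?thesis
    using sums_unique[OF exp_sums] by simp
qed

lemma tail_ratio_strict_mono:
  assumes "0 < x" "x < y"
  shows "tail_ratio t x < tail_ratio t y"
proof -
  have "0 < (\<Sum>j. fact t / fact (j + t) * y ^ j - fact t / fact (j + t) * x ^ j)"
  proof (rule suminf_pos2[where i = 1])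
    show "summable (\<lambda>j. fact t / fact (j + t) * y ^ j - fact t / fact (j + t) * x ^ j)"
      using assms by (intro summable_diff summable_tail_ratio) auto
    show "0 \<le> fact t / fact (j + t) * y ^ j - fact t / fact (j + t) * x ^ j" for j
      using assms by (auto intro!: divide_right_mono mult_left_mono power_mono)
    show "0 < fact t / fact (1 + t) * y ^ 1 - fact t / fact (1 + t) * x ^ 1"
      using assms by (simp del: fact_Suc) (intro divide_strict_right_mono mult_strict_left_mono; simp del: fact_Suc)
  qed
  also have "\<dots> = tail_ratio t y - tail_ratio t x"
    unfolding tail_ratio_def using assms by (intro suminf_diff[symmetric] summable_tail_ratio) auto
  finally show ?thesis by simp
qed

lemma continuous_on_tail_ratio:
  assumes "A \<subseteq> {0<..}"
  shows "continuous_on A (tail_ratio t)"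
proof -
  have "continuous_on A (\<lambda>x. ftail t x * exp x * fact t / x ^ t)"
    using assms by (intro continuous_intros continuous_on_ftail) auto
  moreover have "ftail t x * exp x * fact t / x ^ t = tail_ratio t x" if "x > 0" for x
    using that by (simp add: ftail_eq_tail_ratio field_simps exp_minus)
  ultimately show ?thesis
    using assms by (metis (no_types, lifting) continuous_on_cong greaterThan_iff subsetD)
qed

lemma tail_ratio_attains:
  assumes "y > 1"
  obtains c where "c > 0" "tail_ratio t c = y"
proof -
  have ln_pos: "ln y > 0" using assms by simp
  have "tail_ratio t (ln y) \<le> y"
    using tail_ratio_le_exp[OF ln_pos] assms by simp
  moreover have "y \<le> tail_ratio t (y * (real t + 1))"
    using tail_ratio_ge[of "y * (real t + 1)" t] assms by simp
  moreover have "ln y \<le> y * (real t + 1)"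
    using ln_le_minus_one[of y] assms by (smt (verit) mult_le_cancel_left1 of_nat_0_le_iff)
  moreover have "continuous_on {ln y .. y * (real t + 1)} (tail_ratio t)"
    using ln_pos by (intro continuous_on_tail_ratio) auto
  ultimately obtain c where c: "ln y \<le> c" "tail_ratio t c = y"
    using IVT'[of "tail_ratio t" "ln y" y "y * (real t + 1)"] by blast
  show thesis
    using ln_pos c by (intro that[of c]) auto
qed

lemma ftail_pos:
  assumes "x > 0"
  shows "ftail t x > 0"
proof -
  have "tail_ratio t x > 0"
    using tail_ratio_ge[OF assms, of t] assms by (smt (verit) divide_nonneg_nonneg of_nat_0_le_iff)
  then show ?thesis
    using assms by (simp add: ftail_eq_tail_ratio)
qed

lemma ftail_Suc_minus_scaled_derivative:
  assumes "x > 0"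
  shows "ftail (Suc m) x - s * x * (exp (- x) * x ^ m / fact m)
           = exp (- x) * x ^ Suc m / fact (Suc m) * (tail_ratio (Suc m) x - s * real (Suc m))"
proof -
  have "exp (- x) * x ^ Suc m / fact (Suc m) * (s * real (Suc m)) = s * x * (exp (- x) * x ^ m / fact m)"
    by (simp add: field_simps del: of_nat_Suc)
  then show ?thesis
    using assms by (simp add: ftail_eq_tail_ratio right_diff_distrib)
qed

lemma strict_min_of_derivative_sign:
  fixes g g' :: "real \<Rightarrow> real"
  assumes deriv: "\<And>z. z > 0 \<Longrightarrow> (g has_real_derivative g' z) (at z)"
    and neg: "\<And>z. 0 < z \<Longrightarrow> z < c \<Longrightarrow> g' z < 0"
    and pos: "\<And>z. c < z \<Longrightarrow> g' z > 0"
    and "c > 0" "v > 0" "v \<noteq> c"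
  shows "g c < g v"
proof -
  have cont: "continuous_on {x..y} g" if "x > 0" for x y
    using that by (intro continuous_at_imp_continuous_on ballI DERIV_isCont[OF deriv]) auto
  show ?thesis
  proof (cases "v < c")
    case True
    show ?thesis
    proof (rule DERIV_neg_imp_decreasing_open[OF True _ cont])
      show "\<exists>y. (g has_real_derivative y) (at z) \<and> y < 0" if "v < z" "z < c" for z
        using that assms by (meson deriv neg order.strict_trans)
    qed (use assms in simp)
  next
    case False
    with assms have "c < v" by simp
    show ?thesis
    proof (rule DERIV_pos_imp_increasing_open[OF \<open>c < v\<close> _ cont])
      show "\<exists>y. (g has_real_derivative y) (at z) \<and> y > 0" if "c < z" "z < v" for z
        using that assms by (meson deriv pos order.strict_trans)
    qed (use assms in simp)
  qed
qed

lemma mu_rk_eqI: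
  assumes "c > 0"
    and "\<And>v. v > 0 \<Longrightarrow> v \<noteq> c \<Longrightarrow> c / ftail (k - 1) c ^ (r - 1) < v / ftail (k - 1) v ^ (r - 1)"
  shows "mu_rk r k = c"
  unfolding mu_rk_def
proof (rule the_equality)
  show "0 < c \<and> (\<forall>\<nu>>0. c / ftail (k - 1) c ^ (r - 1) \<le> \<nu> / ftail (k - 1) \<nu> ^ (r - 1))"
    using assms by (metis order.refl less_imp_le)
next
  fix u
  assume "0 < u \<and> (\<forall>\<nu>>0. u / ftail (k - 1) u ^ (r - 1) \<le> \<nu> / ftail (k - 1) \<nu> ^ (r - 1))"
  with assms show "u = c"
    by (meson not_le)
qed

lemma has_real_derivative_div_ftail_power:
  assumes "z > 0"
  shows "((\<lambda>x. x / ftail (Suc m) x ^ Suc n) has_real_derivative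
           exp (- z) * z ^ Suc m / fact (Suc m) * (tail_ratio (Suc m) z - real (Suc n) * real (Suc m))
             / (ftail (Suc m) z ^ Suc n * ftail (Suc m) z)) (at z)"
proof -
  define F where "F = ftail (Suc m) z"
  define D where "D = exp (- z) * z ^ m / fact m"
  have "F > 0"
    unfolding F_def by (rule ftail_pos[OF assms])
  have "(ftail (Suc m) has_real_derivative D) (at z)"
    unfolding D_def by (rule has_real_derivative_ftail_Suc)
  from DERIV_divide[OF DERIV_ident DERIV_power[OF this], of "Suc n"] \<open>F > 0\<close>
  have "((\<lambda>x. x / ftail (Suc m) x ^ Suc n) has_real_derivative
      (1 * (F * F ^ n) - z * (real (Suc n) * (D * F ^ n))) / ((F * F ^ n) * (F * F ^ n))) (at z)"
    unfolding F_def D_def by simp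
  moreover have "(1 * (F * F ^ n) - z * (real (Suc n) * (D * F ^ n))) / ((F * F ^ n) * (F * F ^ n))
      = (F - real (Suc n) * z * D) / (F ^ Suc n * F)"
    using \<open>F > 0\<close> by (simp add: field_simps)
  ultimately show ?thesis
    unfolding F_def D_def ftail_Suc_minus_scaled_derivative[OF assms, symmetric] by (simp add: mult.assoc)
qed

lemma mu_rk_stationary:
  assumes "1 < s * t"
  shows "mu_rk (Suc s) (Suc t) > 0 \<and> tail_ratio t (mu_rk (Suc s) (Suc t)) = real s * real t"
proof -
  obtain n m where s: "s = Suc n" and t: "t = Suc m"
    using assms by (cases s; cases t) auto
  have "real s * real t > 1"
    using assms by (metis of_nat_1 of_nat_less_iff of_nat_mult)
  then obtain c where "c > 0" and c: "tail_ratio t c = real s * real t"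
    using tail_ratio_attains by blast
  define g where "g x = x / ftail t x ^ s" for x :: real
  define g' where "g' x = exp (- x) * x ^ t / fact t * (tail_ratio t x - real s * real t)
                             / (ftail t x ^ s * ftail t x)" for x :: real
  have deriv: "(g has_real_derivative g' z) (at z)" if "z > 0" for z
    unfolding g_def g'_def s t by (rule has_real_derivative_div_ftail_power[OF that])
  have "g c < g v" if "v > 0" "v \<noteq> c" for v
  proof (rule strict_min_of_derivative_sign[OF deriv _ _ \<open>c > 0\<close> that])
    show "g' z < 0" if "0 < z" "z < c" for z
      using tail_ratio_strict_mono[OF that, of t] c ftail_pos[OF that(1), of t] that(1)
      unfolding g'_def by (intro divide_neg_pos mult_pos_neg) auto
    show "g' z > 0" if "c < z" for z
      using tail_ratio_strict_mono[OF \<open>c > 0\<close> that, of t] c ftail_pos[of z t] that \<open>c > 0\<close>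
      unfolding g'_def by (intro divide_pos_pos mult_pos_pos) auto
  qed
  then have "mu_rk (Suc s) (Suc t) = c"
    by (intro mu_rk_eqI \<open>c > 0\<close>) (simp add: g_def)
  with \<open>c > 0\<close> c show ?thesis by simp
qed

lemma p_alpha_beta_ratio:
  assumes "r > 0" "k > 0" "mu_rk r k > 0"
  shows "real k * p_rk r k k * alpha_rk r k / (real r * beta_rk r k) = 1 / tail_ratio (k - 1) (mu_rk r k)"
proof -
  obtain j where k: "k = Suc j"
    using assms(2) by (cases k) auto
  define u where "u = mu_rk r k"
  define E where "E = exp (- u) * u ^ j / fact j"
  have "u > 0" "ftail k u > 0" "E > 0"
    using assms(3) ftail_pos unfolding u_def E_def by auto
  have "fact k = real k * fact j" "u ^ k = u * u ^ j"
    by (simp_all add: k)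
  then have "real k * p_rk r k k * alpha_rk r k = E * u"
    unfolding p_rk_def alpha_rk_def u_def[symmetric] E_def
    using \<open>ftail k u > 0\<close> assms(2) by (simp add: field_simps)
  moreover have "real r * beta_rk r k = u * (E * tail_ratio j u)"
    unfolding beta_rk_def u_def[symmetric] E_def
    using assms(1) \<open>u > 0\<close> by (simp add: k ftail_eq_tail_ratio)
  ultimately show ?thesis
    using \<open>u > 0\<close> \<open>E > 0\<close> by (simp add: k u_def)
qed

theorem lemma40:
  fixes r k :: nat
  assumes "r \<ge> 2" and "k \<ge> 2" and "(r, k) \<noteq> (2, 2)"
  shows "real k * p_rk r k k * alpha_rk r k / (real r * beta_rk r k)
           = 1 / ((real r - 1) * (real k - 1))"
proof -
  obtain s t where r: "r = Suc s" and k: "k = Suc t"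
    using assms(1,2) by (cases r; cases k) auto
  have "1 < s * t"
    using assms unfolding r k by (cases s; cases t) auto
  then have "mu_rk r k > 0" and "tail_ratio t (mu_rk r k) = real s * real t"
    using mu_rk_stationary unfolding r k by blast+
  then show ?thesis
    using p_alpha_beta_ratio[of r k] unfolding r k by simp
qed

end
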